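(* Let $p$ be a prime, $m\ge1$, $s\ge0$ integers, $R^4=\mathbb{F}_{p^m}[u]/\langle u^4\rangle$, $f(x)\in\mathbb{F}_{p^m}[x]$ irreducible, $\omega(x)=f(x)^{p^s}$, $R^{4,\omega}=R^4[x]/\langle\omega(x)\rangle$ and $R^{1,\omega}=\mathbb{F}_{p^m}[x]/\langle\omega(x)\rangle$. Let $a,t$ be integers with $0\le t<a\le p^s-1$, and let $h(x)\in R^{1,\omega}$ be either $0$ or a unit of $R^{1,\omega}$. Let $L$ be the smallest non-negative integer such that $u^3f(x)^L\in\langle u^2f(x)^a+u^3f(x)^t h(x)\rangle$ (ideal of $R^{4,\omega}$). Then $$L=\begin{cases} a & \text{if } h(x)=0,\\ \min\{a,\ p^s-a+t\} & \text{if } h(x)\ne0.\end{cases}$$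
   Context: $R^{1,\omega}$ is identified with the subring of $R^{4,\omega}$ consisting of classes of polynomials over $\mathbb{F}_{p^m}$ (no $u$). *)

theory Defs
  imports "HOL-Computational_Algebra.Computational_Algebra"
begin

text \<open>Elements of R^4[x] = F[u,x]/(u^4) are represented by polynomials in u whose
coefficients are polynomials in x, i.e. by values of type 'a poly poly
(outer variable u, inner variable x).  The ring R^{4,omega} = R^4[x]/(omega(x)) is
F[x][u]/(u^4, omega(x)).  Hence y lies in the principal ideal generated by g in
R^{4,omega} iff y lies in the ideal of F[x][u] generated by g, u^4 and omega.\<close>

definition R4w_in_ideal :: "'a::field poly \<Rightarrow> 'a poly poly \<Rightarrow> 'a poly poly \<Rightarrow> bool" where
  "R4w_in_ideal \<omega> g y \<longleftrightarrow>
     (\<exists>r q1 q2. y = r * g + q1 * monom 1 4 + q2 * [:\<omega>:])"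

end

theory Submission imports Defs begin

text \<open>Comparing the coefficients of u^2 and u^3, the element u^3 c lies in the ideal
  generated by u^2 f^a + u^3 f^t h exactly when c lies in the ideal of F[x] generated by
  f^a and f^(N-a) f^t h, where N = p^s: the u^2 coefficient forces the constant term of
  the multiplier of the generator to be divisible by f^(N-a).  If f^N divides h this
  ideal is (f^a); if h is a unit modulo f^N it is (f^a, f^(N-a+t)), generated by the
  smaller of the two powers.\<close>

lemma R4w_in_ideal_monom_3_iff:
  fixes \<omega> A B c :: "'a::field poly"
  shows "R4w_in_ideal \<omega> (monom A 2 + monom B 3) (monom c 3) \<longleftrightarrow>
    (\<exists>r0 r1. \<omega> dvd r0 * A \<and> \<omega> dvd c - r0 * B - r1 * A)"
proof
  assume "R4w_in_ideal \<omega> (monom A 2 + monom B 3) (monom c 3)"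
  then obtain r q1 q2 where
    "monom c 3 = monom A 2 * r + monom B 3 * r + monom 1 4 * q1 + smult \<omega> q2"
    unfolding R4w_in_ideal_def by (auto simp: algebra_simps)
  then have u2: "coeff (monom c 3) 2 = coeff (monom A 2 * r + monom B 3 * r
                   + monom 1 4 * q1 + smult \<omega> q2) 2"
    and u3: "coeff (monom c 3) 3 = coeff (monom A 2 * r + monom B 3 * r
                   + monom 1 4 * q1 + smult \<omega> q2) 3"
    by simp_all
  from u2 have "0 = A * coeff r 0 + \<omega> * coeff q2 2"
    by (simp add: coeff_monom_mult)
  then have "coeff r 0 * A = \<omega> * (- coeff q2 2)"
    by (simp add: algebra_simps add_eq_0_iff)
  moreover from u3 have "c = A * coeff r 1 + B * coeff r 0 + \<omega> * coeff q2 3"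
    by (simp add: coeff_monom_mult numeral_3_eq_3 numeral_2_eq_2)
  then have "c - coeff r 0 * B - coeff r 1 * A = \<omega> * coeff q2 3"
    by (simp add: algebra_simps)
  ultimately show "\<exists>r0 r1. \<omega> dvd r0 * A \<and> \<omega> dvd c - r0 * B - r1 * A"
    by (metis dvd_triv_left)
next
  assume "\<exists>r0 r1. \<omega> dvd r0 * A \<and> \<omega> dvd c - r0 * B - r1 * A"
  then obtain r0 r1 k2 k3 where k2: "r0 * A = \<omega> * k2" and k3: "c - r0 * B - r1 * A = \<omega> * k3"
    by (auto elim!: dvdE)
  have "monom c 3 = (monom r0 0 + monom r1 1) * (monom A 2 + monom B 3)
      + monom (- (r1 * B)) 0 * monom 1 4 + (monom (- k2) 2 + monom k3 3) * monom \<omega> 0"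
    unfolding ring_distribs mult_monom
    by (rule poly_eqI) (use k2 k3 in \<open>auto simp: coeff_monom algebra_simps\<close>)
  then show "R4w_in_ideal \<omega> (monom A 2 + monom B 3) (monom c 3)"
    unfolding R4w_in_ideal_def monom_0 by blast
qed

lemma R4w_in_ideal_power_monom_3_iff:
  fixes f B c :: "'a::field poly"
  assumes "f \<noteq> 0" and "a \<le> N"
  shows "R4w_in_ideal (f ^ N) (monom (f ^ a) 2 + monom B 3) (monom c 3) \<longleftrightarrow>
    (\<exists>q r. c = q * (f ^ (N - a) * B) + r * f ^ a)"
  unfolding R4w_in_ideal_monom_3_iff
proof
  have N: "f ^ N = f ^ (N - a) * f ^ a"
    using assms(2) by (simp flip: power_add)
  assume "\<exists>r0 r1. f ^ N dvd r0 * f ^ a \<and> f ^ N dvd c - r0 * B - r1 * f ^ a"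
  then obtain r0 r1 where "f ^ (N - a) * f ^ a dvd r0 * f ^ a"
    and "f ^ (N - a) * f ^ a dvd c - r0 * B - r1 * f ^ a"
    unfolding N by blast
  moreover from this(1) have "f ^ (N - a) dvd r0"
    using assms(1) by simp
  ultimately obtain q k where "r0 = f ^ (N - a) * q"
    and "c - r0 * B - r1 * f ^ a = f ^ (N - a) * f ^ a * k"
    by (auto elim!: dvdE)
  then have "c = q * (f ^ (N - a) * B) + (r1 + f ^ (N - a) * k) * f ^ a"
    by (simp add: algebra_simps eq_diff_eq)
  then show "\<exists>q r. c = q * (f ^ (N - a) * B) + r * f ^ a" by blast
next
  assume "\<exists>q r. c = q * (f ^ (N - a) * B) + r * f ^ a"
  then obtain q r where "c - (q * f ^ (N - a)) * B - r * f ^ a = 0"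
    by (auto simp: algebra_simps)
  moreover have "f ^ N dvd (q * f ^ (N - a)) * f ^ a"
    using assms(2) by (simp add: mult.assoc flip: power_add)
  ultimately show "\<exists>r0 r1. f ^ N dvd r0 * f ^ a \<and> f ^ N dvd c - r0 * B - r1 * f ^ a"
    by (metis dvd_0_right)
qed

lemma linear_combination_iff_dvd:
  fixes x y d c :: "'a::comm_ring_1"
  assumes "d dvd x" and "d dvd y" and "d = k * x + l * y"
  shows "(\<exists>q r. c = q * x + r * y) \<longleftrightarrow> d dvd c"
proof
  assume "\<exists>q r. c = q * x + r * y"
  then show "d dvd c" using assms(1,2) by auto
next
  assume "d dvd c"
  then obtain e where "c = d * e" by (auto elim!: dvdE)
  then have "c = (e * k) * x + (e * l) * y"
    unfolding assms(3) by (simp add: algebra_simps)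
  then show "\<exists>q r. c = q * x + r * y" by blast
qed

lemma irreducible_power_dvd_power_iff:
  fixes f :: "'a::algebraic_semidom"
  assumes "irreducible f"
  shows "f ^ m dvd f ^ n \<longleftrightarrow> m \<le> n"
  using assms dvd_power_iff[of f m n] by (auto simp: irreducible_def)

lemma R4w_in_ideal_monom_3_iff_of_dvd:
  fixes f h :: "'a::field poly"
  assumes "irreducible f" and "a \<le> N" and "f ^ N dvd h"
  shows "R4w_in_ideal (f ^ N) (monom (f ^ a) 2 + monom (f ^ t * h) 3) (monom (f ^ L) 3)
    \<longleftrightarrow> a \<le> L"
proof -
  have "f ^ a dvd h"
    using assms(2,3) by (meson dvd_trans le_imp_power_dvd)
  then have "(\<exists>q r. f ^ L = q * (f ^ (N - a) * (f ^ t * h)) + r * f ^ a) \<longleftrightarrow> f ^ a dvd f ^ L"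
    by (intro linear_combination_iff_dvd[where k = 0 and l = 1]) auto
  then show ?thesis
    using assms(1,2) irreducible_power_dvd_power_iff
    by (simp add: R4w_in_ideal_power_monom_3_iff irreducible_def)
qed

lemma R4w_in_ideal_monom_3_iff_of_unit:
  fixes f h v :: "'a::field poly"
  assumes "irreducible f" and "a \<le> N" and "(h * v) mod f ^ N = 1"
  shows "R4w_in_ideal (f ^ N) (monom (f ^ a) 2 + monom (f ^ t * h) 3) (monom (f ^ L) 3)
    \<longleftrightarrow> min a (N - a + t) \<le> L"
proof -
  define M where "M = min a (N - a + t)"
  define x where "x = f ^ (N - a) * (f ^ t * h)"
  have x: "x = f ^ (N - a + t) * h"
    unfolding x_def by (simp add: power_add)
  obtain k where hv: "h * v = 1 + f ^ N * k"
    using div_mult_mod_eq[of "h * v" "f ^ N"] assms(3) by (metis add.commute mult.commute)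
  have "\<exists>k l. f ^ M = k * x + l * f ^ a"
  proof (cases "a \<le> N - a + t")
    case True
    then show ?thesis unfolding M_def by (intro exI[of _ 0] exI[of _ 1]) simp
  next
    case False
    then have M: "M = N - a + t" unfolding M_def by auto
    have "v * x = f ^ M * (h * v)"
      unfolding x M by (simp add: ac_simps)
    also have "\<dots> = f ^ M + f ^ (M + N - a) * k * f ^ a"
      using assms(2) by (simp add: hv algebra_simps flip: power_add)
    finally have "f ^ M = v * x + (- (f ^ (M + N - a) * k)) * f ^ a"
      by (simp add: algebra_simps)
    then show ?thesis by blast
  qed
  moreover have "f ^ M dvd x" "f ^ M dvd f ^ a"
    unfolding x M_def by (simp_all add: le_imp_power_dvd)
  ultimately have "(\<exists>q r. f ^ L = q * x + r * f ^ a) \<longleftrightarrow> f ^ M dvd f ^ L"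
    using linear_combination_iff_dvd by blast
  then show ?thesis
    using assms(1,2) irreducible_power_dvd_power_iff
    by (simp add: R4w_in_ideal_power_monom_3_iff irreducible_def x_def M_def)
qed

theorem proposition4p1:
  fixes p m s a t :: nat and f h :: "'a::{field,finite} poly"
  assumes "prime p" and "m \<ge> 1" and "card (UNIV :: 'a set) = p ^ m"
    and "irreducible f"
    and "t < a" and "a \<le> p ^ s - 1"
    and "h mod f ^ (p ^ s) = 0 \<or> (\<exists>v. (h * v) mod f ^ (p ^ s) = 1)"
  shows "(LEAST L. R4w_in_ideal (f ^ (p ^ s))
                     (monom (f ^ a) 2 + monom (f ^ t * h) 3)
                     (monom (f ^ L) 3))
         = (if h mod f ^ (p ^ s) = 0 then a else min a (p ^ s - a + t))"
proof -
  have "a \<le> p ^ s" using assms(6) by linarith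
  have Least_ge: "(LEAST L. M \<le> L) = M" for M :: nat
    by (rule Least_equality) auto
  show ?thesis
  proof (cases "h mod f ^ (p ^ s) = 0")
    case True
    then show ?thesis
      using R4w_in_ideal_monom_3_iff_of_dvd[OF assms(4) \<open>a \<le> p ^ s\<close>] Least_ge
      by (simp add: mod_eq_0_iff_dvd)
  next
    case False
    then obtain v where "(h * v) mod f ^ (p ^ s) = 1" using assms(7) by blast
    then show ?thesis
      using R4w_in_ideal_monom_3_iff_of_unit[OF assms(4) \<open>a \<le> p ^ s\<close>] Least_ge False
      by simp
  qed
qed

end
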